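(* For a group $G$ the following are equivalent: (1) $G$ is non-abelian; (2) there exist pairwise disjoint subsets $E_1,E_2,E_3,E_4,E_5$ of $G$ and elements $g_1,g_2\in G$ such that $g_1E_1=E_2=g_2^{-1}E_4$ and $E_3=g_1^{-1}E_5=g_2E_1$.
   Context: Here $gE=\{gx:x\in E\}$ denotes left translation in $G$. *)

theory Defs
  imports "HOL-Algebra.Coset"
begin

end

theory Submission
  imports Defs
begin

text \<open>If \<open>a\<close> and \<open>b\<close> do not commute, then \<open>\<one>, a, b, ba, ab\<close> are pairwise distinct, and the
  singletons \<open>E\<^sub>1 = {\<one>}, E\<^sub>2 = {a}, E\<^sub>3 = {b}, E\<^sub>4 = {ba}, E\<^sub>5 = {ab}\<close> with \<open>g\<^sub>1 = a, g\<^sub>2 = b\<close>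
  satisfy the relations. Conversely, the relations force \<open>E\<^sub>4 = g\<^sub>2g\<^sub>1E\<^sub>1\<close> and \<open>E\<^sub>5 = g\<^sub>1g\<^sub>2E\<^sub>1\<close>;
  in an abelian group these coincide, which is impossible for disjoint nonempty sets.\<close>

lemma (in group) lcos_singleton: "g \<in> carrier G \<Longrightarrow> g <# {x} = {g \<otimes> x}"
  by (simp add: l_coset_def)

lemma (in group) lcos_inv_lcos:
  "\<lbrakk> M \<subseteq> carrier G; g \<in> carrier G \<rbrakk> \<Longrightarrow> g <# (inv g <# M) = M"
  by (simp add: lcos_m_assoc lcos_mult_one)

lemma (in group) noncommuting_distinct:
  assumes "a \<in> carrier G" "b \<in> carrier G" "a \<otimes> b \<noteq> b \<otimes> a"
  shows "distinct [\<one>, a, b, b \<otimes> a, a \<otimes> b]"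
proof -
  have "a \<otimes> b \<noteq> \<one>" "b \<otimes> a \<noteq> \<one>"
    using assms inv_equality[of a b] inv_equality[of b a] by auto
  then show ?thesis
    using assms by auto
qed

lemma (in group) translation_relations_products:
  assumes "E1 \<subseteq> carrier G" "E4 \<subseteq> carrier G" "E5 \<subseteq> carrier G"
    and "g1 \<in> carrier G" "g2 \<in> carrier G"
    and "g1 <# E1 = E2" "E2 = inv g2 <# E4" "inv g1 <# E5 = g2 <# E1"
  shows "E4 = (g2 \<otimes> g1) <# E1" "E5 = (g1 \<otimes> g2) <# E1"
proof -
  have "E4 = g2 <# (inv g2 <# E4)"
    using assms(2,5) by (simp add: lcos_inv_lcos)
  also have "\<dots> = g2 <# (g1 <# E1)"
    using assms(6,7) by simp
  also have "\<dots> = (g2 \<otimes> g1) <# E1"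
    using assms(1,4,5) by (simp add: lcos_m_assoc)
  finally show "E4 = (g2 \<otimes> g1) <# E1" .
  have "E5 = g1 <# (inv g1 <# E5)"
    using assms(3,4) by (simp add: lcos_inv_lcos)
  also have "\<dots> = g1 <# (g2 <# E1)"
    using assms(8) by simp
  also have "\<dots> = (g1 \<otimes> g2) <# E1"
    using assms(1,4,5) by (simp add: lcos_m_assoc)
  finally show "E5 = (g1 \<otimes> g2) <# E1" .
qed

theorem mainTheorem11:
  fixes G (structure)
  assumes "group G"
  shows "\<not> comm_group G \<longleftrightarrow>
    (\<exists>E1 E2 E3 E4 E5 g1 g2.
       E1 \<subseteq> carrier G \<and> E2 \<subseteq> carrier G \<and> E3 \<subseteq> carrier G \<and>
       E4 \<subseteq> carrier G \<and> E5 \<subseteq> carrier G \<and>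
       E1 \<noteq> {} \<and> E2 \<noteq> {} \<and> E3 \<noteq> {} \<and> E4 \<noteq> {} \<and> E5 \<noteq> {} \<and>
       disjnt E1 E2 \<and> disjnt E1 E3 \<and> disjnt E1 E4 \<and> disjnt E1 E5 \<and>
       disjnt E2 E3 \<and> disjnt E2 E4 \<and> disjnt E2 E5 \<and>
       disjnt E3 E4 \<and> disjnt E3 E5 \<and> disjnt E4 E5 \<and>
       g1 \<in> carrier G \<and> g2 \<in> carrier G \<and>
       g1 <# E1 = E2 \<and> E2 = (inv g2) <# E4 \<and>
       E3 = (inv g1) <# E5 \<and> (inv g1) <# E5 = g2 <# E1)"
    (is "_ \<longleftrightarrow> ?relations")
proof
  interpret group G by fact
  assume "\<not> comm_group G"
  then obtain a b where ab: "a \<in> carrier G" "b \<in> carrier G" "a \<otimes> b \<noteq> b \<otimes> a"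
    using group_comm_groupI by blast
  from noncommuting_distinct[OF ab] show ?relations
    using ab
    by (intro exI[of _ "{\<one>}"] exI[of _ "{a}"] exI[of _ "{b}"] exI[of _ "{b \<otimes> a}"]
        exI[of _ "{a \<otimes> b}"] exI[of _ a] exI[of _ b])
      (auto simp: lcos_singleton m_assoc[symmetric])
next
  interpret group G by fact
  assume ?relations
  then obtain E1 E2 E3 E4 E5 g1 g2 where
    rel: "E1 \<subseteq> carrier G" "E4 \<subseteq> carrier G" "E5 \<subseteq> carrier G" "g1 \<in> carrier G" "g2 \<in> carrier G"
      "g1 <# E1 = E2" "E2 = inv g2 <# E4" "inv g1 <# E5 = g2 <# E1"
    and "E4 \<noteq> {}" "disjnt E4 E5"
    by blast
  then have "E4 \<noteq> E5"
    by (auto simp: disjnt_def)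
  then show "\<not> comm_group G"
    using translation_relations_products[OF rel] rel(4,5) comm_group.axioms(1) comm_monoid.m_comm by metis
qed

end
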